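(* Let $M$ be a free $\mathbb{T}$-module with a finite $\mathbb{T}$-basis, $V$ its associated complex vector space, $(\cdot,\cdot)$ a bicomplex scalar product on $M$ which is hyperbolic positive and closed on $V$, $\|\cdot\|$ the norm on $M$ defined below, and $d(\widehat X,\widehat Y):=\|\widehat X-\widehat Y\|$. Then for all $\widehat X,\widehat Y\in M$: 1. $\|\widehat X\|\ge 0$; 2. $\|\widehat X\|=0\iff\widehat X=0$; 3. $\|\alpha\widehat X\|=|\alpha|\,\|\widehat X\|$ for all $\alpha\in\mathbb{C}(\mathbf{i_1})$ or $\alpha\in\mathbb{C}(\mathbf{i_2})$; 4. $\|\alpha\widehat X\|\le\sqrt2\,|\alpha|_{\mathbf 3}\,\|\widehat X\|$ for all $\alpha\in\mathbb{T}$; 5. $\|\widehat X+\widehat Y\|\le\|\widehat X\|+\|\widehat Y\|$; 6. $(M,d)$ is a metric space.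
   Context: Bicomplex numbers: $\mathbb{T}=\{z_1+z_2\mathbf{i_2}: z_1,z_2\in\mathbb{C}(\mathbf{i_1})\}$, $\mathbb{C}(\mathbf{i_k})=\{x+y\mathbf{i_k}: x,y\in\mathbb{R}\}$ ($k=1,2$), $\mathbf{i_1}^2=\mathbf{i_2}^2=-1$, $\mathbf{i_1}\mathbf{i_2}=\mathbf{i_2}\mathbf{i_1}=\mathbf{j}$, $\mathbf{j}^2=1$ (commutative). Hyperbolic numbers $\mathbb{D}=\{x+y\mathbf{j}:x,y\in\mathbb{R}\}$. Idempotents $\mathbf{e_1}=(1+\mathbf{j})/2$, $\mathbf{e_2}=(1-\mathbf{j})/2$. For $w=z_1+z_2\mathbf{i_2}$, $|w|_{\mathbf 3}=|w|=\sqrt{|z_1|^2+|z_2|^2}$ (Euclidean norm in $\mathbb{R}^4$); for $\alpha=x+y\mathbf{i_k}$, $|\alpha|=\sqrt{x^2+y^2}$. Conjugation: $(z_1+z_2\mathbf{i_2})^{\dagger_3}=\overline{z_1}-\overline{z_2}\mathbf{i_2}$. $\mathbb{D}^+=\{a\mathbf{e_1}+b\mathbf{e_2}: a,b\ge 0\}$, and $(a\mathbf{e_1}+b\mathbf{e_2})^{1/2}=\sqrt a\,\mathbf{e_1}+\sqrt b\,\mathbf{e_2}$. $M$ has $\mathbb{T}$-basis $\{\widehat m_1,\dots,\widehat m_n\}$, $V=\{\sum x_l\widehat m_l: x_l\in\mathbb{C}(\mathbf{i_1})\}$; for $\widehat X=\sum x_l\widehat m_l$ with $x_l=x_{1l}\mathbf{e_1}+x_{2l}\mathbf{e_2}$,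 $x_{kl}\in\mathbb{C}(\mathbf{i_1})$, put $\widehat X_{\mathbf{e_k}}=\sum_l x_{kl}\widehat m_l\in V$. A bicomplex scalar product is a map $(\cdot,\cdot):M\times M\to\mathbb{T}$ with: $(\widehat X,\widehat Y_1+\widehat Y_2)=(\widehat X,\widehat Y_1)+(\widehat X,\widehat Y_2)$; $(\widehat X,\alpha\widehat Y)=\alpha(\widehat X,\widehat Y)$ for $\alpha\in\mathbb{T}$; $(\widehat X,\widehat Y)=(\widehat Y,\widehat X)^{\dagger_3}$; $(\widehat X,\widehat X)=0\iff\widehat X=0$. Hyperbolic positive: $(\widehat X,\widehat X)\in\mathbb{D}^+$ for all $\widehat X$. Closed on $V$: $(\widehat X,\widehat Y)\in\mathbb{C}(\mathbf{i_1})$ for $\widehat X,\widehat Y\in V$. For $\widehat Z\in V$, $\|\widehat Z\|=(\widehat Z,\widehat Z)^{1/2}$. For $\widehat X\in M$, $\|\widehat X\|:=\big|(\widehat X,\widehat X)^{1/2}\big|=\big|\mathbf{e_1}\|\widehat X_{\mathbf{e_1}}\|+\mathbf{e_2}\|\widehat X_{\mathbf{e_2}}\|\big|=\big((\|\widehat X_{\mathbf{e_1}}\|^2+\|\widehat X_{\mathbf{e_2}}\|^2)/2\big)^{1/2}$. *)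

theory Defs
  imports Complex_Main
begin

text \<open>Bicomplex numbers z1 + z2 i2 with z1, z2 in C(i1); C(i1) is modelled by the
  Isabelle type complex (i1 = ii).\<close>
datatype bicomplex = BC (bc1: complex) (bc2: complex)

definition bc_zero :: bicomplex where "bc_zero = BC 0 0"
definition bc_add :: "bicomplex \<Rightarrow> bicomplex \<Rightarrow> bicomplex" where
  "bc_add u w = BC (bc1 u + bc1 w) (bc2 u + bc2 w)"
definition bc_minus :: "bicomplex \<Rightarrow> bicomplex \<Rightarrow> bicomplex" where
  "bc_minus u w = BC (bc1 u - bc1 w) (bc2 u - bc2 w)"
definition bc_mult :: "bicomplex \<Rightarrow> bicomplex \<Rightarrow> bicomplex" where
  "bc_mult u w = BC (bc1 u * bc1 w - bc2 u * bc2 w) (bc1 u * bc2 w + bc2 u * bc1 w)"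

definition bc_conj3 :: "bicomplex \<Rightarrow> bicomplex" where
  "bc_conj3 u = BC (cnj (bc1 u)) (- cnj (bc2 u))"

definition bc_norm :: "bicomplex \<Rightarrow> real" where
  "bc_norm u = sqrt ((cmod (bc1 u))\<^sup>2 + (cmod (bc2 u))\<^sup>2)"

text \<open>j = i1 i2, idempotents e1 = (1+j)/2, e2 = (1-j)/2.\<close>
definition bc_j :: bicomplex where "bc_j = BC 0 \<i>"
definition bc_e1 :: bicomplex where "bc_e1 = BC (1/2) (\<i>/2)"
definition bc_e2 :: bicomplex where "bc_e2 = BC (1/2) (-\<i>/2)"

definition bc_of_real :: "real \<Rightarrow> bicomplex" where "bc_of_real r = BC (complex_of_real r) 0"

definition bc_hyp :: "real \<Rightarrow> real \<Rightarrow> bicomplex" where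
  "bc_hyp a b = bc_add (bc_mult (bc_of_real a) bc_e1) (bc_mult (bc_of_real b) bc_e2)"

definition bc_Dplus :: "bicomplex set" where
  "bc_Dplus = {w. \<exists>a b. a \<ge> 0 \<and> b \<ge> 0 \<and> w = bc_hyp a b}"

definition bc_Dsqrt :: "bicomplex \<Rightarrow> bicomplex" where
  "bc_Dsqrt w = (THE s. \<exists>a b. a \<ge> 0 \<and> b \<ge> 0 \<and> w = bc_hyp a b \<and> s = bc_hyp (sqrt a) (sqrt b))"

text \<open>The free T-module M with finite basis indexed by the finite type 'n:
  elements are coordinate functions 'n => bicomplex (X = sum_l x_l m_l).\<close>
definition mod_add :: "('n \<Rightarrow> bicomplex) \<Rightarrow> ('n \<Rightarrow> bicomplex) \<Rightarrow> ('n \<Rightarrow> bicomplex)" where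
  "mod_add X Y = (\<lambda>l. bc_add (X l) (Y l))"
definition mod_minus :: "('n \<Rightarrow> bicomplex) \<Rightarrow> ('n \<Rightarrow> bicomplex) \<Rightarrow> ('n \<Rightarrow> bicomplex)" where
  "mod_minus X Y = (\<lambda>l. bc_minus (X l) (Y l))"
definition mod_scale :: "bicomplex \<Rightarrow> ('n \<Rightarrow> bicomplex) \<Rightarrow> ('n \<Rightarrow> bicomplex)" where
  "mod_scale \<alpha> X = (\<lambda>l. bc_mult \<alpha> (X l))"
definition mod_zero :: "'n \<Rightarrow> bicomplex" where "mod_zero = (\<lambda>l. bc_zero)"

definition mod_V :: "('n \<Rightarrow> bicomplex) set" where
  "mod_V = {X. \<forall>l. bc2 (X l) = 0}"

definition bicomplex_scalar_product ::
  "(('n \<Rightarrow> bicomplex) \<Rightarrow> ('n \<Rightarrow> bicomplex) \<Rightarrow> bicomplex) \<Rightarrow> bool" where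
  "bicomplex_scalar_product sp \<longleftrightarrow>
     (\<forall>X Y1 Y2. sp X (mod_add Y1 Y2) = bc_add (sp X Y1) (sp X Y2)) \<and>
     (\<forall>X Y \<alpha>. sp X (mod_scale \<alpha> Y) = bc_mult \<alpha> (sp X Y)) \<and>
     (\<forall>X Y. sp X Y = bc_conj3 (sp Y X)) \<and>
     (\<forall>X. sp X X = bc_zero \<longleftrightarrow> X = mod_zero)"

definition hyperbolic_positive ::
  "(('n \<Rightarrow> bicomplex) \<Rightarrow> ('n \<Rightarrow> bicomplex) \<Rightarrow> bicomplex) \<Rightarrow> bool" where
  "hyperbolic_positive sp \<longleftrightarrow> (\<forall>X. sp X X \<in> bc_Dplus)"

definition closed_on_V ::
  "(('n \<Rightarrow> bicomplex) \<Rightarrow> ('n \<Rightarrow> bicomplex) \<Rightarrow> bicomplex) \<Rightarrow> bool" where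
  "closed_on_V sp \<longleftrightarrow> (\<forall>X\<in>mod_V. \<forall>Y\<in>mod_V. bc2 (sp X Y) = 0)"

definition mod_norm ::
  "(('n \<Rightarrow> bicomplex) \<Rightarrow> ('n \<Rightarrow> bicomplex) \<Rightarrow> bicomplex) \<Rightarrow> ('n \<Rightarrow> bicomplex) \<Rightarrow> real" where
  "mod_norm sp X = bc_norm (bc_Dsqrt (sp X X))"

definition mod_dist ::
  "(('n \<Rightarrow> bicomplex) \<Rightarrow> ('n \<Rightarrow> bicomplex) \<Rightarrow> bicomplex) \<Rightarrow> ('n \<Rightarrow> bicomplex) \<Rightarrow> ('n \<Rightarrow> bicomplex) \<Rightarrow> real" where
  "mod_dist sp X Y = mod_norm sp (mod_minus X Y)"

definition is_metric :: "('a \<Rightarrow> 'a \<Rightarrow> real) \<Rightarrow> bool" where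
  "is_metric d \<longleftrightarrow>
     (\<forall>x y. d x y \<ge> 0) \<and> (\<forall>x y. d x y = 0 \<longleftrightarrow> x = y) \<and>
     (\<forall>x y. d x y = d y x) \<and> (\<forall>x y z. d x z \<le> d x y + d y z)"

end

theory Submission
  imports Defs
begin

(* Writing w = w1 e1 + w2 e2 in the idempotent basis turns bicomplex arithmetic into
   componentwise complex arithmetic. The scalar product thus splits into two hermitian
   forms on M, positive semidefinite by hyperbolic positivity, and the real part of their
   sum is a real inner product with associated norm sqrt 2 * ||X||. Cauchy-Schwarz for it
   yields the triangle inequality. Scaling by alpha multiplies the two diagonal parts by
   |alpha1|^2 and |alpha2|^2; these coincide (with |alpha|^2) when alpha lies in C(i1) or
   C(i2), and are bounded by 2 |alpha|_3^2 in general. *)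

lemma quadratic_nonneg_imp_sq_le:
  fixes a b c :: real
  assumes "c \<ge> 0" and nonneg: "\<And>t. 0 \<le> a + 2 * b * t + c * t\<^sup>2"
  shows "b\<^sup>2 \<le> a * c"
proof (cases "c = 0")
  case True
  have "b = 0"
  proof (rule ccontr)
    assume "b \<noteq> 0"
    have "0 \<le> a + 2 * b * (- (a + 1) / (2 * b))" using nonneg[of "- (a + 1) / (2 * b)"] True by simp
    also have "\<dots> = -1" using \<open>b \<noteq> 0\<close> by (simp add: field_simps)
    finally show False by simp
  qed
  then show ?thesis using True by simp
next
  case False
  with \<open>c \<ge> 0\<close> have pos: "c > 0" by simp
  have "0 \<le> a + 2 * b * (- b / c) + c * (- b / c)\<^sup>2" by (rule nonneg)
  also have "\<dots> = a - b\<^sup>2 / c" using pos by (simp add: field_simps power2_eq_square)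
  finally show ?thesis using pos by (simp add: divide_le_eq mult.commute)
qed

(* The coordinates of w in the idempotent basis: w = bc_idem1 w e1 + bc_idem2 w e2. *)
definition bc_idem1 :: "bicomplex \<Rightarrow> complex" where "bc_idem1 w = bc1 w - \<i> * bc2 w"
definition bc_idem2 :: "bicomplex \<Rightarrow> complex" where "bc_idem2 w = bc1 w + \<i> * bc2 w"

lemma bc_idem_add: "bc_idem1 (bc_add u w) = bc_idem1 u + bc_idem1 w"
  "bc_idem2 (bc_add u w) = bc_idem2 u + bc_idem2 w"
  by (simp_all add: bc_idem1_def bc_idem2_def bc_add_def algebra_simps)

lemma bc_idem_mult: "bc_idem1 (bc_mult u w) = bc_idem1 u * bc_idem1 w"
  "bc_idem2 (bc_mult u w) = bc_idem2 u * bc_idem2 w"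
  by (simp_all add: bc_idem1_def bc_idem2_def bc_mult_def algebra_simps)

lemma bc_idem_conj3: "bc_idem1 (bc_conj3 u) = cnj (bc_idem1 u)"
  "bc_idem2 (bc_conj3 u) = cnj (bc_idem2 u)"
  by (simp_all add: bc_idem1_def bc_idem2_def bc_conj3_def)

lemma bc_idem_zero: "bc_idem1 bc_zero = 0" "bc_idem2 bc_zero = 0"
  by (simp_all add: bc_idem1_def bc_idem2_def bc_zero_def)

lemma bc_idem_complex: "bc_idem1 (BC z 0) = z" "bc_idem2 (BC z 0) = z"
  by (simp_all add: bc_idem1_def bc_idem2_def)

lemma cmod_bc_idem_real_pair:
  "cmod (bc_idem1 (BC (complex_of_real x) (complex_of_real y))) = sqrt (x\<^sup>2 + y\<^sup>2)"
  "cmod (bc_idem2 (BC (complex_of_real x) (complex_of_real y))) = sqrt (x\<^sup>2 + y\<^sup>2)"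
  by (simp_all add: bc_idem1_def bc_idem2_def cmod_def)

lemma bc_idem_hyp: "bc_idem1 (bc_hyp a b) = complex_of_real a"
  "bc_idem2 (bc_hyp a b) = complex_of_real b"
  by (simp_all add: bc_idem1_def bc_idem2_def bc_hyp_def bc_add_def bc_mult_def bc_of_real_def
      bc_e1_def bc_e2_def algebra_simps)

lemma bicomplex_eq_iff_idem: "u = w \<longleftrightarrow> bc_idem1 u = bc_idem1 w \<and> bc_idem2 u = bc_idem2 w"
proof
  assume idem: "bc_idem1 u = bc_idem1 w \<and> bc_idem2 u = bc_idem2 w"
  have recover: "bc1 v = (bc_idem1 v + bc_idem2 v) / 2" "bc2 v = (bc_idem2 v - bc_idem1 v) / (2 * \<i>)"
    for v
    by (simp_all add: bc_idem1_def bc_idem2_def field_simps)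
  have "bc1 u = bc1 w" "bc2 u = bc2 w"
    using idem by (simp_all only: recover)
  then show "u = w" by (simp add: bicomplex.expand)
qed simp

lemma bc_hyp_inject: "bc_hyp a b = bc_hyp a' b' \<longleftrightarrow> a = a' \<and> b = b'"
  by (simp add: bicomplex_eq_iff_idem bc_idem_hyp)

lemma bc_Dsqrt_hyp:
  assumes "a \<ge> 0" "b \<ge> 0"
  shows "bc_Dsqrt (bc_hyp a b) = bc_hyp (sqrt a) (sqrt b)"
  using assms unfolding bc_Dsqrt_def by (intro the_equality) (auto simp: bc_hyp_inject)

lemma bc_norm_hyp: "bc_norm (bc_hyp a b) = sqrt ((a\<^sup>2 + b\<^sup>2) / 2)"
proof -
  have "bc_hyp a b = BC (complex_of_real ((a + b) / 2)) (\<i> * complex_of_real ((a - b) / 2))"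
    by (simp add: bc_hyp_def bc_add_def bc_mult_def bc_of_real_def bc_e1_def bc_e2_def complex_eq_iff)
  then have "bc_norm (bc_hyp a b) = sqrt (((a + b) / 2)\<^sup>2 + ((a - b) / 2)\<^sup>2)"
    by (simp add: bc_norm_def norm_mult power_divide del: of_real_add of_real_diff of_real_divide)
  also have "((a + b) / 2)\<^sup>2 + ((a - b) / 2)\<^sup>2 = (a\<^sup>2 + b\<^sup>2) / 2"
    by (simp add: power2_eq_square field_simps)
  finally show ?thesis .
qed

lemma bc_norm_sq_idem: "(bc_norm w)\<^sup>2 = ((cmod (bc_idem1 w))\<^sup>2 + (cmod (bc_idem2 w))\<^sup>2) / 2"
proof -
  have "(bc_norm w)\<^sup>2 = (cmod (bc1 w))\<^sup>2 + (cmod (bc2 w))\<^sup>2"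
    unfolding bc_norm_def by simp
  then show ?thesis
    unfolding bc_idem1_def bc_idem2_def cmod_power2 by (simp add: power2_eq_square algebra_simps)
qed

lemma bc_norm_nonneg: "bc_norm w \<ge> 0"
  by (simp add: bc_norm_def)

lemma mod_minus_eq_zero_iff: "mod_minus X Y = mod_zero \<longleftrightarrow> X = Y"
  by (auto simp: mod_minus_def mod_zero_def bc_minus_def bc_zero_def fun_eq_iff bicomplex.expand)

lemma mod_minus_commute: "mod_minus Y X = mod_scale (BC (-1) 0) (mod_minus X Y)"
  by (simp add: mod_minus_def mod_scale_def bc_minus_def bc_mult_def)

lemma mod_minus_split: "mod_minus X Z = mod_add (mod_minus X Y) (mod_minus Y Z)"
  by (simp add: mod_minus_def mod_add_def bc_minus_def bc_add_def)

locale hyperbolic_positive_scalar_product =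
  fixes sp :: "('n \<Rightarrow> bicomplex) \<Rightarrow> ('n \<Rightarrow> bicomplex) \<Rightarrow> bicomplex"
  assumes scalar_product: "bicomplex_scalar_product sp"
    and positive: "hyperbolic_positive sp"
begin

lemma sp_add_right: "sp X (mod_add Y Z) = bc_add (sp X Y) (sp X Z)"
  and sp_scale_right: "sp X (mod_scale \<alpha> Y) = bc_mult \<alpha> (sp X Y)"
  and sp_conj_sym: "sp X Y = bc_conj3 (sp Y X)"
  and sp_self_eq_zero_iff: "sp X X = bc_zero \<longleftrightarrow> X = mod_zero"
  using scalar_product unfolding bicomplex_scalar_product_def by blast+

definition form1 :: "('n \<Rightarrow> bicomplex) \<Rightarrow> ('n \<Rightarrow> bicomplex) \<Rightarrow> complex" where
  "form1 X Y = bc_idem1 (sp X Y)"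
definition form2 :: "('n \<Rightarrow> bicomplex) \<Rightarrow> ('n \<Rightarrow> bicomplex) \<Rightarrow> complex" where
  "form2 X Y = bc_idem2 (sp X Y)"

lemma form_add_right: "form1 X (mod_add Y Z) = form1 X Y + form1 X Z"
  "form2 X (mod_add Y Z) = form2 X Y + form2 X Z"
  by (simp_all add: form1_def form2_def sp_add_right bc_idem_add)

lemma form_scale_right: "form1 X (mod_scale \<alpha> Y) = bc_idem1 \<alpha> * form1 X Y"
  "form2 X (mod_scale \<alpha> Y) = bc_idem2 \<alpha> * form2 X Y"
  by (simp_all add: form1_def form2_def sp_scale_right bc_idem_mult)

lemma form_conj_sym: "form1 X Y = cnj (form1 Y X)" "form2 X Y = cnj (form2 Y X)"
  unfolding form1_def form2_def by (metis bc_idem_conj3 sp_conj_sym)+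

lemma form_add_left: "form1 (mod_add X Y) Z = form1 X Z + form1 Y Z"
  "form2 (mod_add X Y) Z = form2 X Z + form2 Y Z"
  by (metis form_conj_sym form_add_right complex_cnj_add)+

lemma form_scale_left: "form1 (mod_scale \<alpha> X) Y = cnj (bc_idem1 \<alpha>) * form1 X Y"
  "form2 (mod_scale \<alpha> X) Y = cnj (bc_idem2 \<alpha>) * form2 X Y"
  by (metis form_conj_sym form_scale_right complex_cnj_mult)+

lemma sp_self_hyp:
  obtains a b where "a \<ge> 0" "b \<ge> 0" "sp X X = bc_hyp a b"
    "form1 X X = complex_of_real a" "form2 X X = complex_of_real b"
proof -
  obtain a b where "a \<ge> 0" "b \<ge> 0" "sp X X = bc_hyp a b"
    using positive unfolding hyperbolic_positive_def bc_Dplus_def by blast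
  then show ?thesis
    by (intro that[of a b]) (simp_all add: form1_def form2_def bc_idem_hyp)
qed

definition re_form :: "('n \<Rightarrow> bicomplex) \<Rightarrow> ('n \<Rightarrow> bicomplex) \<Rightarrow> real" where
  "re_form X Y = Re (form1 X Y) + Re (form2 X Y)"

lemma mod_norm_eq_re_form: "mod_norm sp X = sqrt (re_form X X / 2)"
proof -
  obtain a b where "a \<ge> 0" "b \<ge> 0" "sp X X = bc_hyp a b"
    "form1 X X = complex_of_real a" "form2 X X = complex_of_real b"
    by (rule sp_self_hyp)
  then show ?thesis by (simp add: mod_norm_def bc_Dsqrt_hyp bc_norm_hyp re_form_def)
qed

lemma re_form_self_nonneg: "re_form X X \<ge> 0"
proof -
  obtain a b where "a \<ge> 0" "b \<ge> 0" "form1 X X = complex_of_real a" "form2 X X = complex_of_real b"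
    by (rule sp_self_hyp)
  then show ?thesis by (simp add: re_form_def)
qed

lemma re_form_self_eq_zero_iff: "re_form X X = 0 \<longleftrightarrow> X = mod_zero"
proof -
  obtain a b where ab: "a \<ge> 0" "b \<ge> 0" "sp X X = bc_hyp a b"
    "form1 X X = complex_of_real a" "form2 X X = complex_of_real b"
    by (rule sp_self_hyp)
  have "re_form X X = 0 \<longleftrightarrow> a = 0 \<and> b = 0" using ab by (auto simp: re_form_def)
  also have "\<dots> \<longleftrightarrow> sp X X = bc_zero"
    using ab by (simp add: bicomplex_eq_iff_idem bc_idem_hyp bc_idem_zero)
  finally show ?thesis by (simp add: sp_self_eq_zero_iff)
qed

lemma re_form_commute: "re_form X Y = re_form Y X"
  using form_conj_sym[of X Y] by (simp add: re_form_def)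

lemma re_form_add_right: "re_form X (mod_add Y Z) = re_form X Y + re_form X Z"
  and re_form_add_left: "re_form (mod_add X Y) Z = re_form X Z + re_form Y Z"
  by (simp_all add: re_form_def form_add_right form_add_left)

lemma re_form_scale_real_right: "re_form X (mod_scale (BC (complex_of_real t) 0) Y) = t * re_form X Y"
  by (simp add: re_form_def form_scale_right bc_idem_complex algebra_simps)

lemma re_form_self_scale:
  "re_form (mod_scale \<alpha> X) (mod_scale \<alpha> X)
     = (cmod (bc_idem1 \<alpha>))\<^sup>2 * Re (form1 X X) + (cmod (bc_idem2 \<alpha>))\<^sup>2 * Re (form2 X X)"
proof -
  have cnj_mult: "z * (cnj z * w) = complex_of_real ((cmod z)\<^sup>2) * w" for z w :: complex
    by (simp only: complex_norm_square mult.assoc[symmetric])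
  show ?thesis
    unfolding re_form_def form_scale_left form_scale_right cnj_mult by simp
qed

lemma re_form_self_add: "re_form (mod_add X Y) (mod_add X Y) = re_form X X + 2 * re_form X Y + re_form Y Y"
  by (simp add: re_form_add_left re_form_add_right re_form_commute[of Y X])

lemma re_form_cauchy_schwarz: "(re_form X Y)\<^sup>2 \<le> re_form X X * re_form Y Y"
proof (rule quadratic_nonneg_imp_sq_le[OF re_form_self_nonneg])
  fix t
  let ?tY = "mod_scale (BC (complex_of_real t) 0) Y"
  have "re_form ?tY ?tY = t\<^sup>2 * re_form Y Y"
    unfolding re_form_self_scale by (simp add: bc_idem_complex re_form_def algebra_simps)
  then show "0 \<le> re_form X X + 2 * re_form X Y * t + re_form Y Y * t\<^sup>2"
    using re_form_self_nonneg[of "mod_add X ?tY"]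
    by (simp add: re_form_self_add re_form_scale_real_right algebra_simps)
qed

lemma mod_norm_nonneg: "mod_norm sp X \<ge> 0"
  using re_form_self_nonneg[of X] by (simp add: mod_norm_eq_re_form)

lemma mod_norm_eq_zero_iff: "mod_norm sp X = 0 \<longleftrightarrow> X = mod_zero"
  using re_form_self_nonneg[of X] by (simp add: mod_norm_eq_re_form re_form_self_eq_zero_iff)

lemma mod_norm_triangle: "mod_norm sp (mod_add X Y) \<le> mod_norm sp X + mod_norm sp Y"
proof (rule power2_le_imp_le)
  have sq: "(mod_norm sp Z)\<^sup>2 = re_form Z Z / 2" for Z
    using re_form_self_nonneg[of Z] by (simp add: mod_norm_eq_re_form)
  have "re_form X Y \<le> sqrt ((re_form X Y)\<^sup>2)" by simp
  also have "\<dots> \<le> sqrt (re_form X X * re_form Y Y)"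
    using re_form_cauchy_schwarz real_sqrt_le_mono by blast
  also have "\<dots> = 2 * mod_norm sp X * mod_norm sp Y"
    by (simp add: mod_norm_eq_re_form real_sqrt_mult real_sqrt_divide)
  finally have cauchy_schwarz: "re_form X Y \<le> 2 * mod_norm sp X * mod_norm sp Y" .
  have "(mod_norm sp (mod_add X Y))\<^sup>2 = (mod_norm sp X)\<^sup>2 + re_form X Y + (mod_norm sp Y)\<^sup>2"
    by (simp only: sq re_form_self_add) simp
  also have "\<dots> \<le> (mod_norm sp X + mod_norm sp Y)\<^sup>2"
    using cauchy_schwarz by (simp add: power2_sum)
  finally show "(mod_norm sp (mod_add X Y))\<^sup>2 \<le> (mod_norm sp X + mod_norm sp Y)\<^sup>2" .
  show "0 \<le> mod_norm sp X + mod_norm sp Y" by (simp add: mod_norm_nonneg)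
qed

lemma mod_norm_scale_eq:
  assumes "cmod (bc_idem1 \<alpha>) = c" "cmod (bc_idem2 \<alpha>) = c"
  shows "mod_norm sp (mod_scale \<alpha> X) = c * mod_norm sp X"
proof -
  have "c \<ge> 0" using assms by auto
  have "re_form (mod_scale \<alpha> X) (mod_scale \<alpha> X) / 2 = c\<^sup>2 * (re_form X X / 2)"
    using assms unfolding re_form_self_scale by (simp add: re_form_def algebra_simps)
  then have "mod_norm sp (mod_scale \<alpha> X) = sqrt (c\<^sup>2) * sqrt (re_form X X / 2)"
    by (simp only: mod_norm_eq_re_form real_sqrt_mult)
  with \<open>c \<ge> 0\<close> show ?thesis by (simp add: mod_norm_eq_re_form)
qed

lemma mod_norm_scale_complex: "mod_norm sp (mod_scale (BC z 0) X) = cmod z * mod_norm sp X"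
  by (rule mod_norm_scale_eq) (simp_all add: bc_idem_complex)

lemma mod_norm_scale_real_pair:
  "mod_norm sp (mod_scale (BC (complex_of_real x) (complex_of_real y)) X) = sqrt (x\<^sup>2 + y\<^sup>2) * mod_norm sp X"
  by (rule mod_norm_scale_eq) (simp_all add: cmod_bc_idem_real_pair)

lemma mod_norm_scale_le: "mod_norm sp (mod_scale \<alpha> X) \<le> sqrt 2 * bc_norm \<alpha> * mod_norm sp X"
proof -
  let ?c = "2 * (bc_norm \<alpha>)\<^sup>2"
  have idem_le: "(cmod (bc_idem1 \<alpha>))\<^sup>2 \<le> ?c" "(cmod (bc_idem2 \<alpha>))\<^sup>2 \<le> ?c"
    by (simp_all add: bc_norm_sq_idem)
  obtain a b where "a \<ge> 0" "b \<ge> 0" "form1 X X = complex_of_real a" "form2 X X = complex_of_real b"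
    by (rule sp_self_hyp)
  with idem_le have "re_form (mod_scale \<alpha> X) (mod_scale \<alpha> X) \<le> ?c * re_form X X"
    unfolding re_form_self_scale by (simp add: re_form_def distrib_left add_mono mult_right_mono)
  then have "sqrt (re_form (mod_scale \<alpha> X) (mod_scale \<alpha> X) / 2) \<le> sqrt (?c * (re_form X X / 2))"
    by simp
  also have "\<dots> = sqrt 2 * bc_norm \<alpha> * sqrt (re_form X X / 2)"
    using bc_norm_nonneg by (simp only: real_sqrt_mult real_sqrt_abs abs_of_nonneg)
  finally show ?thesis by (simp add: mod_norm_eq_re_form)
qed

lemma is_metric_mod_dist: "is_metric (mod_dist sp)"
  unfolding is_metric_def mod_dist_def
proof (intro conjI allI)
  fix X Y Z
  show "mod_norm sp (mod_minus X Y) \<ge> 0" by (rule mod_norm_nonneg)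
  show "mod_norm sp (mod_minus X Y) = 0 \<longleftrightarrow> X = Y"
    by (simp add: mod_norm_eq_zero_iff mod_minus_eq_zero_iff)
  show "mod_norm sp (mod_minus X Y) = mod_norm sp (mod_minus Y X)"
    using mod_norm_scale_complex[of "-1"] by (simp add: mod_minus_commute[of Y X])
  show "mod_norm sp (mod_minus X Z) \<le> mod_norm sp (mod_minus X Y) + mod_norm sp (mod_minus Y Z)"
    unfolding mod_minus_split[of X Z Y] by (rule mod_norm_triangle)
qed

end

theorem mainTheorem10:
  fixes sp :: "('n::finite \<Rightarrow> bicomplex) \<Rightarrow> ('n \<Rightarrow> bicomplex) \<Rightarrow> bicomplex"
  assumes "bicomplex_scalar_product sp"
    and "hyperbolic_positive sp"
    and "closed_on_V sp"
  shows "(\<forall>X. mod_norm sp X \<ge> 0)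
    \<and> (\<forall>X. mod_norm sp X = 0 \<longleftrightarrow> X = mod_zero)
    \<and> (\<forall>X z. mod_norm sp (mod_scale (BC z 0) X) = cmod z * mod_norm sp X)
    \<and> (\<forall>X (x::real) (y::real). mod_norm sp (mod_scale (BC (complex_of_real x) (complex_of_real y)) X)
          = sqrt (x\<^sup>2 + y\<^sup>2) * mod_norm sp X)
    \<and> (\<forall>X \<alpha>. mod_norm sp (mod_scale \<alpha> X) \<le> sqrt 2 * bc_norm \<alpha> * mod_norm sp X)
    \<and> (\<forall>X Y. mod_norm sp (mod_add X Y) \<le> mod_norm sp X + mod_norm sp Y)
    \<and> is_metric (mod_dist sp)"
proof -
  interpret hyperbolic_positive_scalar_product sp
    using assms(1,2) by unfold_locales
  show ?thesis
    by (simp add: mod_norm_nonneg mod_norm_eq_zero_iff mod_norm_scale_complex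
        mod_norm_scale_real_pair mod_norm_scale_le mod_norm_triangle is_metric_mod_dist)
qed

end
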